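(* Let $F$ be any algebraically closed field and let $G_F$ be the group of polynomial automorphisms of the affine space $\mathbb{A}^3_F$ generated by the three maps $m_1(x,y,z)=(yz-x,y,z)$, $m_2(x,y,z)=(x,xz-y,z)$, $m_3(x,y,z)=(x,y,xy-z)$. Then the homomorphism from the free product $\mathbb{Z}/2*\mathbb{Z}/2*\mathbb{Z}/2$ to $G_F$ sending the generator of the $i$-th factor to $m_i$ is an isomorphism; i.e. $G_F\cong\mathbb{Z}/2*\mathbb{Z}/2*\mathbb{Z}/2$, the only relations among $m_1,m_2,m_3$ being $m_i^2=1$.
   Context: Each $m_i$ is a polynomial involution of $F^3$ (with integer coefficients). *)

theory Defs
  imports "HOL-Computational_Algebra.Polynomial" "HOL-Algebra.Bij" "HOL-Algebra.Generated_Groups"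
begin

definition alg_closed :: "'a::field itself \<Rightarrow> bool" where
  "alg_closed _ \<longleftrightarrow> (\<forall>p :: 'a poly. degree p \<ge> 1 \<longrightarrow> (\<exists>x. poly p x = 0))"

fun mmap :: "nat \<Rightarrow> 'a::field \<times> 'a \<times> 'a \<Rightarrow> 'a \<times> 'a \<times> 'a" where
  "mmap i (x, y, z) =
     (if i = 1 then (y * z - x, y, z)
      else if i = 2 then (x, x * z - y, z)
      else (x, y, x * y - z))"

text \<open>Free product Z/2 * Z/2 * Z/2 realised on reduced words over the letters 1,2,3
  (no two adjacent letters equal); product = concatenation followed by free reduction
  using the relations (letter)^2 = 1.\<close>
fun push :: "nat \<Rightarrow> nat list \<Rightarrow> nat list" where
  "push a [] = [a]"
| "push a (b # s) = (if a = b then s else a # b # s)"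

fun red :: "nat list \<Rightarrow> nat list" where
  "red [] = []"
| "red (a # w) = push a (red w)"

definition reduced_word :: "nat list \<Rightarrow> bool" where
  "reduced_word w \<longleftrightarrow> set w \<subseteq> {1, 2, 3} \<and> (\<forall>i. Suc i < length w \<longrightarrow> w ! i \<noteq> w ! Suc i)"

definition Z2_free_product3 :: "nat list monoid" where
  "Z2_free_product3 = \<lparr>carrier = {w. reduced_word w}, mult = (\<lambda>u v. red (u @ v)), one = []\<rparr>"

definition G_F :: "'a::field itself \<Rightarrow> ('a \<times> 'a \<times> 'a \<Rightarrow> 'a \<times> 'a \<times> 'a) monoid" where
  "G_F _ = (BijGroup UNIV) \<lparr>carrier := generate (BijGroup UNIV) {mmap 1, mmap 2, mmap 3}\<rparr>"

definition word_map :: "nat list \<Rightarrow> ('a::field \<times> 'a \<times> 'a \<Rightarrow> 'a \<times> 'a \<times> 'a)" where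
  "word_map w = foldr (\<lambda>i f. mmap i \<circ> f) w id"

end

theory Submission
  imports Defs
begin

text \<open>Apply a reduced word to the generic diagonal point \<open>(X, X, X)\<close> over \<open>F[X]\<close>. If the outermost
  letter is \<open>a\<close>, the coordinate \<open>a\<close> of the resulting triple has degree equal to the sum of the degrees
  of the other two (all degrees positive): the first move \<open>m\<^sub>a\<close> creates this shape, and applying a
  different involution \<open>m\<^sub>b\<close> replaces coordinate \<open>b\<close> by a product of the other two minus itself, of
  strictly larger degree, which moves the shape to coordinate \<open>b\<close>. So the outermost letter can be
  read off from the degrees, and two reduced words with the same image agree letter by letter.
  Over an infinite field a map determines the polynomial triple; algebraic closedness is used only
  to know that \<open>F\<close> is infinite.\<close>

lemma reduced_word_Nil [simp]: "reduced_word []"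
  by (simp add: reduced_word_def)

lemma reduced_word_singleton [simp]: "reduced_word [a] \<longleftrightarrow> a \<in> {1, 2, 3}"
  by (simp add: reduced_word_def)

lemma reduced_word_Cons_Cons [simp]:
  "reduced_word (a # b # w) \<longleftrightarrow> a \<in> {1, 2, 3} \<and> a \<noteq> b \<and> reduced_word (b # w)"
  unfolding reduced_word_def by (auto simp: nth_Cons split: nat.splits)

lemma reduced_word_ConsD: "reduced_word (a # w) \<Longrightarrow> a \<in> {1, 2, 3} \<and> reduced_word w"
  by (cases w) auto

lemma reduced_word_push: "reduced_word w \<Longrightarrow> a \<in> {1, 2, 3} \<Longrightarrow> reduced_word (push a w)"
  by (cases w) (auto dest: reduced_word_ConsD)

lemma reduced_word_red: "set w \<subseteq> {1, 2, 3} \<Longrightarrow> reduced_word (red w)"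
  by (induction w) (auto intro: reduced_word_push)

lemma mmap_mmap [simp]: "mmap i (mmap i p) = p"
  by (cases p) auto

lemma mmap_comp_mmap [simp]: "mmap i \<circ> mmap i = id"
  by (simp add: fun_eq_iff)

lemma bij_mmap: "bij (mmap i)"
  by (rule o_bij[of "mmap i"]) simp_all

lemma word_map_Nil [simp]: "word_map [] = id"
  by (simp add: word_map_def)

lemma word_map_Cons [simp]: "word_map (a # w) = mmap a \<circ> word_map w"
  by (simp add: word_map_def)

lemma word_map_append: "word_map (u @ v) = word_map u \<circ> word_map v"
  by (induction u) (simp_all add: comp_assoc)

lemma word_map_push: "word_map (push a w) = mmap a \<circ> word_map w"
  by (cases w) (simp_all flip: comp_assoc)

lemma word_map_red: "word_map (red w) = word_map w"
  by (induction w) (simp_all add: word_map_push)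

lemma bij_word_map: "bij (word_map w)"
proof (induction w)
  case Nil
  show ?case
    by (simp only: word_map_Nil bij_id)
next
  case (Cons a w)
  show ?case
    unfolding word_map_Cons by (rule bij_comp[OF Cons.IH bij_mmap])
qed

text \<open>\<open>mmap\<close> is only defined over fields, but the degree argument takes place in \<open>F[X]\<close>,
  so the same formulas are restated over an arbitrary commutative ring.\<close>

fun mmap_ring :: "nat \<Rightarrow> 'a::comm_ring \<times> 'a \<times> 'a \<Rightarrow> 'a \<times> 'a \<times> 'a" where
  "mmap_ring i (x, y, z) =
     (if i = 1 then (y * z - x, y, z)
      else if i = 2 then (x, x * z - y, z)
      else (x, y, x * y - z))"

lemma mmap_ring_mmap_ring [simp]: "mmap_ring i (mmap_ring i P) = P"
  by (cases P) auto

definition diagonal_image :: "nat list \<Rightarrow> 'a::comm_ring_1 poly \<times> 'a poly \<times> 'a poly" where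
  "diagonal_image w = foldr mmap_ring w ([:0, 1:], [:0, 1:], [:0, 1:])"

lemma diagonal_image_Nil: "diagonal_image [] = ([:0, 1:], [:0, 1:], [:0, 1:])"
  by (simp add: diagonal_image_def)

lemma diagonal_image_Cons: "diagonal_image (a # w) = mmap_ring a (diagonal_image w)"
  by (simp add: diagonal_image_def)

definition dominant_coord :: "nat \<Rightarrow> 'a::zero poly \<times> 'a poly \<times> 'a poly \<Rightarrow> bool" where
  "dominant_coord i P \<longleftrightarrow> (case P of (p, q, r) \<Rightarrow>
     0 < degree p \<and> 0 < degree q \<and> 0 < degree r \<and>
     (i = 1 \<and> degree p = degree q + degree r \<or>
      i = 2 \<and> degree q = degree p + degree r \<or>
      i = 3 \<and> degree r = degree p + degree q))"

lemma degree_mult_diff: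
  fixes p q r :: "'a::idom poly"
  assumes "degree p < degree q + degree r" "q \<noteq> 0" "r \<noteq> 0"
  shows "degree (q * r - p) = degree q + degree r"
proof -
  have "degree (q * r + - p) = degree (q * r)"
    using assms by (intro degree_add_eq_left) (simp add: degree_mult_eq)
  then show ?thesis
    using assms by (simp add: degree_mult_eq)
qed

lemma dominant_coord_unique:
  assumes "dominant_coord a P" "dominant_coord b P"
  shows "a = b"
proof -
  obtain p q r where P: "P = (p, q, r)"
    by (cases P)
  show ?thesis
    using assms unfolding P dominant_coord_def prod.case by (elim conjE disjE; linarith)
qed

lemma not_dominant_coord_diagonal: "\<not> dominant_coord a (x, x, x)"
  unfolding dominant_coord_def prod.case by (intro notI, elim conjE disjE; linarith)

lemma dominant_coord_first_move:
  fixes x :: "'a::idom poly"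
  assumes "0 < degree x" "a \<in> {1, 2, 3}"
  shows "dominant_coord a (mmap_ring a (x, x, x))"
proof -
  have deg: "degree (x * x - x) = degree x + degree x"
    using assms by (intro degree_mult_diff) auto
  consider "a = 1" | "a = 2" | "a = 3"
    using assms by blast
  then show ?thesis
    using assms deg by cases (simp_all add: dominant_coord_def)
qed

lemma dominant_coord_mmap_ring:
  fixes P :: "'a::idom poly \<times> 'a poly \<times> 'a poly"
  assumes dom: "dominant_coord b P" and a: "a \<in> {1, 2, 3}" "a \<noteq> b"
  shows "dominant_coord a (mmap_ring a P)"
proof -
  obtain p q r where P: "P = (p, q, r)"
    by (cases P)
  have pos: "0 < degree p" "0 < degree q" "0 < degree r"
    using dom by (simp_all add: P dominant_coord_def)
  then have nonzero: "p \<noteq> 0" "q \<noteq> 0" "r \<noteq> 0"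
    by auto
  \<comment> \<open>the third coordinate has positive degree, so coordinate \<open>a\<close> has less than half the total\<close>
  have less: "a = 1 \<Longrightarrow> degree p < degree q + degree r"
    "a = 2 \<Longrightarrow> degree q < degree p + degree r"
    "a = 3 \<Longrightarrow> degree r < degree p + degree q"
    using dom a unfolding P dominant_coord_def prod.case by (elim conjE disjE; linarith)+
  consider "a = 1" | "a = 2" | "a = 3"
    using a by blast
  then show ?thesis
  proof cases
    case 1
    then have "degree (q * r - p) = degree q + degree r"
      using less nonzero by (intro degree_mult_diff) auto
    with 1 pos show ?thesis
      by (simp add: P dominant_coord_def)
  next
    case 2
    then have "degree (p * r - q) = degree p + degree r"
      using less nonzero by (intro degree_mult_diff) auto
    with 2 pos show ?thesis
      by (simp add: P dominant_coord_def)
  next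
    case 3
    then have "degree (p * q - r) = degree p + degree q"
      using less nonzero by (intro degree_mult_diff) auto
    with 3 pos show ?thesis
      by (simp add: P dominant_coord_def)
  qed
qed

lemma dominant_coord_diagonal_image:
  "reduced_word (a # w) \<Longrightarrow> dominant_coord a (diagonal_image (a # w) :: 'a::idom poly \<times> _)"
proof (induction w arbitrary: a)
  case Nil
  then show ?case
    unfolding diagonal_image_Cons diagonal_image_Nil by (intro dominant_coord_first_move) simp_all
next
  case (Cons b w)
  then have "dominant_coord b (diagonal_image (b # w) :: 'a poly \<times> _)"
    by simp
  moreover have "a \<in> {1, 2, 3}" "a \<noteq> b"
    using Cons.prems by simp_all
  ultimately show ?case
    unfolding diagonal_image_Cons[of a] by (rule dominant_coord_mmap_ring)
qed

lemma diagonal_image_eq_Nil_iff: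
  assumes "reduced_word w"
  shows "(diagonal_image w :: 'a::idom poly \<times> _) = diagonal_image [] \<longleftrightarrow> w = []"
proof (cases w)
  case (Cons a v)
  then have "dominant_coord a (diagonal_image w :: 'a poly \<times> _)"
    using assms dominant_coord_diagonal_image by blast
  then show ?thesis
    using Cons not_dominant_coord_diagonal by (fastforce simp: diagonal_image_Nil)
qed simp

lemma diagonal_image_inject:
  assumes "reduced_word u" "reduced_word v"
    and "(diagonal_image u :: 'a::idom poly \<times> 'a poly \<times> 'a poly) = diagonal_image v"
  shows "u = v"
  using assms
proof (induction u arbitrary: v)
  case Nil
  then show ?case
    using diagonal_image_eq_Nil_iff by metis
next
  case (Cons a u)
  show ?case
  proof (cases v)
    case Nil
    then show ?thesis
      using Cons.prems diagonal_image_eq_Nil_iff by metis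
  next
    case (Cons b w)
    have "dominant_coord a (diagonal_image (a # u) :: 'a poly \<times> _)"
      "dominant_coord b (diagonal_image (a # u) :: 'a poly \<times> _)"
      using Cons.prems \<open>v = b # w\<close> dominant_coord_diagonal_image by metis+
    then have "a = b"
      by (rule dominant_coord_unique)
    then have "(diagonal_image u :: 'a poly \<times> _) = diagonal_image w"
      using Cons.prems \<open>v = b # w\<close> by (metis diagonal_image_Cons mmap_ring_mmap_ring)
    then have "u = w"
      using Cons.IH Cons.prems \<open>v = b # w\<close> reduced_word_ConsD by blast
    with \<open>a = b\<close> \<open>v = b # w\<close> show ?thesis
      by simp
  qed
qed

definition eval_triple :: "'a::comm_ring poly \<times> 'a poly \<times> 'a poly \<Rightarrow> 'a \<Rightarrow> 'a \<times> 'a \<times> 'a" where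
  "eval_triple P t = (case P of (p, q, r) \<Rightarrow> (poly p t, poly q t, poly r t))"

lemma eval_triple_mmap_ring: "eval_triple (mmap_ring i P) t = mmap i (eval_triple P t)"
  by (cases P) (simp add: eval_triple_def)

lemma eval_triple_diagonal_image: "eval_triple (diagonal_image w) t = word_map w (t, t, t)"
proof (induction w)
  case Nil
  show ?case
    by (simp add: diagonal_image_Nil eval_triple_def)
next
  case (Cons a w)
  then show ?case
    by (simp add: diagonal_image_Cons eval_triple_mmap_ring)
qed

lemma poly_eq_poly_eq_iff_infinite:
  fixes p q :: "'a::idom poly"
  assumes "infinite (UNIV :: 'a set)"
  shows "poly p = poly q \<longleftrightarrow> p = q"
proof
  assume "poly p = poly q"
  then have "{x. poly (p - q) x = 0} = UNIV"
    by (simp add: fun_eq_iff)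
  with assms show "p = q"
    using poly_roots_finite[of "p - q"] by auto
qed simp

lemma eval_triple_inject:
  assumes "infinite (UNIV :: 'a::idom set)" "eval_triple P = eval_triple (Q :: 'a poly \<times> _)"
  shows "P = Q"
proof -
  obtain p q r p' q' r' where "P = (p, q, r)" "Q = (p', q', r')"
    by (cases P, cases Q)
  moreover have "poly p = poly p'" "poly q = poly q'" "poly r = poly r'"
    using assms(2) calculation by (simp_all add: eval_triple_def fun_eq_iff)
  ultimately show ?thesis
    using assms(1) by (simp add: poly_eq_poly_eq_iff_infinite)
qed

lemma inj_on_word_map:
  assumes "infinite (UNIV :: 'a::field set)"
  shows "inj_on (word_map :: _ \<Rightarrow> 'a \<times> 'a \<times> 'a \<Rightarrow> _) {w. reduced_word w}"
proof (rule inj_onI)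
  fix u v
  assume "u \<in> {w. reduced_word w}" "v \<in> {w. reduced_word w}"
    and eq: "(word_map u :: 'a \<times> 'a \<times> 'a \<Rightarrow> _) = word_map v"
  have "eval_triple (diagonal_image u :: 'a poly \<times> _) = eval_triple (diagonal_image v)"
    using eq by (simp add: fun_eq_iff eval_triple_diagonal_image)
  then have "(diagonal_image u :: 'a poly \<times> _) = diagonal_image v"
    using assms eval_triple_inject by blast
  with \<open>u \<in> _\<close> \<open>v \<in> _\<close> show "u = v"
    using diagonal_image_inject by blast
qed

lemma alg_closed_imp_infinite:
  assumes "alg_closed TYPE('a::field)"
  shows "infinite (UNIV :: 'a set)"
proof
  assume fin: "finite (UNIV :: 'a set)"
  define P :: "'a poly" where "P = (\<Prod>a\<in>UNIV. [:-a, 1:])"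
  have "degree P = card (UNIV :: 'a set)"
    unfolding P_def by (subst degree_prod_eq_sum_degree) auto
  then have "degree P \<ge> 1"
    using fin by (simp add: card_gt_0_iff Suc_le_eq)
  moreover have "degree (P + 1) = degree P"
    using calculation by (intro degree_add_eq_left) simp
  ultimately obtain x where "poly (P + 1) x = 0"
    using assms unfolding alg_closed_def by metis
  moreover have "poly P x = 0"
    unfolding P_def poly_prod using fin by (simp add: prod_zero_iff)
  ultimately show False
    by simp
qed

lemma BijGroup_UNIV_carrier: "carrier (BijGroup UNIV) = {f. bij f}"
  by (simp add: BijGroup_def Bij_def)

lemma BijGroup_UNIV_one: "\<one>\<^bsub>BijGroup UNIV\<^esub> = id"
  by (simp add: BijGroup_def fun_eq_iff)

lemma BijGroup_UNIV_mult: "bij f \<Longrightarrow> bij g \<Longrightarrow> f \<otimes>\<^bsub>BijGroup UNIV\<^esub> g = f \<circ> g"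
  by (simp add: BijGroup_def Bij_def compose_def fun_eq_iff)

lemma BijGroup_UNIV_inv_mmap: "inv\<^bsub>BijGroup UNIV\<^esub> (mmap i) = mmap i"
  by (rule group.inv_equality[OF group_BijGroup])
     (simp_all add: BijGroup_UNIV_carrier BijGroup_UNIV_mult BijGroup_UNIV_one bij_mmap
       del: mmap.simps)

lemma word_map_in_generate:
  "reduced_word w \<Longrightarrow>
    (word_map w :: 'a::field \<times> 'a \<times> 'a \<Rightarrow> _) \<in> generate (BijGroup UNIV) {mmap 1, mmap 2, mmap 3}"
proof (induction w)
  case Nil
  show ?case
    using generate.one[of "BijGroup UNIV" "{mmap 1, mmap 2, mmap 3}"]
    by (simp only: word_map_Nil BijGroup_UNIV_one)
next
  case (Cons a w)
  then have "a \<in> {1, 2, 3}" "reduced_word w"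
    using reduced_word_ConsD by blast+
  then have "(mmap a :: 'a \<times> 'a \<times> 'a \<Rightarrow> _) \<in> generate (BijGroup UNIV) {mmap 1, mmap 2, mmap 3}"
    "(word_map w :: 'a \<times> 'a \<times> 'a \<Rightarrow> _) \<in> generate (BijGroup UNIV) {mmap 1, mmap 2, mmap 3}"
    using Cons.IH by (auto intro: generate.incl)
  from generate.eng[OF this] show ?case
    by (simp only: word_map_Cons BijGroup_UNIV_mult bij_mmap bij_word_map)
qed

lemma mmap_in_word_map_image: "i \<in> {1, 2, 3} \<Longrightarrow> mmap i \<in> word_map ` {w. reduced_word w}"
  by (rule image_eqI[of _ _ "[i]"]) simp_all

lemma generate_subset_word_map:
  "generate (BijGroup UNIV) {mmap 1, mmap 2, mmap 3} \<subseteq> word_map ` {w. reduced_word w}"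
proof
  fix f
  assume "f \<in> generate (BijGroup UNIV) {mmap 1, mmap 2, mmap 3}"
  then show "f \<in> word_map ` {w. reduced_word w}"
  proof (induction rule: generate.induct)
    case one
    show ?case
      by (metis BijGroup_UNIV_one word_map_Nil reduced_word_Nil image_eqI mem_Collect_eq)
  next
    case (incl h)
    then obtain i where "i \<in> {1, 2, 3}" "h = mmap i"
      by blast
    then show ?case
      using mmap_in_word_map_image by blast
  next
    case (inv h)
    then obtain i where "i \<in> {1, 2, 3}" "inv\<^bsub>BijGroup UNIV\<^esub> h = mmap i"
      using BijGroup_UNIV_inv_mmap by blast
    then show ?case
      using mmap_in_word_map_image by metis
  next
    case (eng g h)
    then obtain u v where "reduced_word u" "reduced_word v" "g = word_map u" "h = word_map v"
      by blast
    then have "reduced_word (red (u @ v))"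
      by (intro reduced_word_red) (auto simp: reduced_word_def)
    moreover have "g \<otimes>\<^bsub>BijGroup UNIV\<^esub> h = word_map (red (u @ v))"
      using \<open>g = word_map u\<close> \<open>h = word_map v\<close>
      by (simp add: BijGroup_UNIV_mult bij_word_map word_map_red word_map_append)
    ultimately show ?case
      by blast
  qed
qed

lemma Z2_free_product3_carrier: "carrier Z2_free_product3 = {w. reduced_word w}"
  by (simp add: Z2_free_product3_def)

lemma G_F_carrier:
  "carrier (G_F TYPE('a::field)) = generate (BijGroup UNIV) {mmap 1, mmap 2, mmap 3}"
  by (simp add: G_F_def)

lemma word_map_hom: "word_map \<in> hom Z2_free_product3 (G_F TYPE('a::field))"
proof (rule homI)
  fix u
  assume "u \<in> carrier Z2_free_product3"
  then show "word_map u \<in> carrier (G_F TYPE('a))"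
    unfolding Z2_free_product3_carrier G_F_carrier using word_map_in_generate by blast
next
  fix u v
  show "word_map (u \<otimes>\<^bsub>Z2_free_product3\<^esub> v) = word_map u \<otimes>\<^bsub>G_F TYPE('a)\<^esub> word_map v"
    by (simp add: Z2_free_product3_def G_F_def BijGroup_UNIV_mult bij_word_map word_map_red
        word_map_append)
qed

theorem proposition1p5:
  assumes "alg_closed TYPE('a::field)"
  shows "(word_map :: nat list \<Rightarrow> ('a \<times> 'a \<times> 'a \<Rightarrow> 'a \<times> 'a \<times> 'a))
           \<in> iso Z2_free_product3 (G_F TYPE('a))"
proof -
  have "inj_on (word_map :: _ \<Rightarrow> 'a \<times> 'a \<times> 'a \<Rightarrow> _) {w. reduced_word w}"
    using alg_closed_imp_infinite[OF assms] by (rule inj_on_word_map)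
  moreover have "(word_map :: _ \<Rightarrow> 'a \<times> 'a \<times> 'a \<Rightarrow> _) ` {w. reduced_word w}
      = generate (BijGroup UNIV) {mmap 1, mmap 2, mmap 3}"
    using word_map_in_generate generate_subset_word_map by blast
  ultimately show ?thesis
    using word_map_hom by (simp add: iso_def bij_betw_def Z2_free_product3_carrier G_F_carrier)
qed

end
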